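(* Let $G=(V,E)$ be a graph, $k$ a positive integer, $C$ a minimum vertex cover of $G$, and $I=V\setminus C$. Let $D$ be a $k$-membership dominating set of $G$. Let $C_1=D\cap C$, $I_1=I\setminus (N(C_1)\cap I)$, and $R=N(C_1)\cap I\cap D$. Then $I_1\subseteq D$, and every vertex of $C\setminus (N[C_1]\cup N(I_1))$ is dominated by $R$ (i.e. has a neighbor in $R$ or belongs to $R$).
   Context: All graphs are finite, simple and undirected. For $v\in V$, $N(v)$ and $N[v]$ are the open and closed neighborhoods; for $S\subseteq V$, $N(S)=\bigcup_{u\in S}N(u)\setminus S$ and $N[S]=\bigcup_{u\in S}N[u]$. A set $S\subseteq V$ is a dominating set if every vertex lies in $S$ or has a neighbor in $S$. The membership of $u$ in $S$ is $M(u,S)=|N[u]\cap S|$. A $k$-membership dominating set is a dominating set $S$ with $M(u,S)\le k$ for all $u\in V$. *)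

theory Defs
  imports Main
begin

definition graph :: "'a set \<Rightarrow> ('a \<Rightarrow> 'a \<Rightarrow> bool) \<Rightarrow> bool" where
  "graph V E \<longleftrightarrow> finite V \<and> (\<forall>u v. E u v \<longrightarrow> u \<in> V \<and> v \<in> V)
     \<and> (\<forall>u v. E u v \<longrightarrow> E v u) \<and> (\<forall>u. \<not> E u u)"

definition nbhd :: "'a set \<Rightarrow> ('a \<Rightarrow> 'a \<Rightarrow> bool) \<Rightarrow> 'a \<Rightarrow> 'a set" where
  "nbhd V E v = {u \<in> V. E v u}"

definition cnbhd :: "'a set \<Rightarrow> ('a \<Rightarrow> 'a \<Rightarrow> bool) \<Rightarrow> 'a \<Rightarrow> 'a set" where
  "cnbhd V E v = insert v (nbhd V E v)"

definition set_nbhd :: "'a set \<Rightarrow> ('a \<Rightarrow> 'a \<Rightarrow> bool) \<Rightarrow> 'a set \<Rightarrow> 'a set" where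
  "set_nbhd V E S = (\<Union>u\<in>S. nbhd V E u) - S"

definition set_cnbhd :: "'a set \<Rightarrow> ('a \<Rightarrow> 'a \<Rightarrow> bool) \<Rightarrow> 'a set \<Rightarrow> 'a set" where
  "set_cnbhd V E S = (\<Union>u\<in>S. cnbhd V E u)"

definition vertex_cover :: "'a set \<Rightarrow> ('a \<Rightarrow> 'a \<Rightarrow> bool) \<Rightarrow> 'a set \<Rightarrow> bool" where
  "vertex_cover V E C \<longleftrightarrow> C \<subseteq> V \<and> (\<forall>u v. E u v \<longrightarrow> u \<in> C \<or> v \<in> C)"

definition min_vertex_cover :: "'a set \<Rightarrow> ('a \<Rightarrow> 'a \<Rightarrow> bool) \<Rightarrow> 'a set \<Rightarrow> bool" where
  "min_vertex_cover V E C \<longleftrightarrow> vertex_cover V E C \<and>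
     (\<forall>C'. vertex_cover V E C' \<longrightarrow> card C \<le> card C')"

definition dominating_set :: "'a set \<Rightarrow> ('a \<Rightarrow> 'a \<Rightarrow> bool) \<Rightarrow> 'a set \<Rightarrow> bool" where
  "dominating_set V E S \<longleftrightarrow> S \<subseteq> V \<and> (\<forall>v\<in>V. v \<in> S \<or> (\<exists>u\<in>S. E v u))"

definition membership :: "'a set \<Rightarrow> ('a \<Rightarrow> 'a \<Rightarrow> bool) \<Rightarrow> 'a \<Rightarrow> 'a set \<Rightarrow> nat" where
  "membership V E u S = card (cnbhd V E u \<inter> S)"

definition k_membership_dom_set :: "'a set \<Rightarrow> ('a \<Rightarrow> 'a \<Rightarrow> bool) \<Rightarrow> nat \<Rightarrow> 'a set \<Rightarrow> bool" where
  "k_membership_dom_set V E k S \<longleftrightarrow> dominating_set V E S \<and>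
     (\<forall>u\<in>V. membership V E u S \<le> k)"

definition dominated_by :: "'a set \<Rightarrow> ('a \<Rightarrow> 'a \<Rightarrow> bool) \<Rightarrow> 'a set \<Rightarrow> 'a \<Rightarrow> bool" where
  "dominated_by V E R v \<longleftrightarrow> v \<in> R \<or> (\<exists>u\<in>R. E v u)"

end

theory Submission
  imports Defs
begin

text \<open>Only two properties of the hypotheses are used: \<open>C\<close> is a vertex cover, so every
  neighbour of a vertex outside \<open>C\<close> lies in \<open>C\<close>, and \<open>D\<close> is dominating. A vertex of \<open>I\<close>
  missing from \<open>D\<close> is dominated by a vertex of \<open>C\<close>, hence of \<open>C1\<close>, so it lies in \<open>N(C1)\<close>;
  this gives \<open>I1 \<subseteq> D\<close>. A vertex \<open>v\<close> of \<open>C\<close> outside \<open>N[C1]\<close> is not in \<open>D\<close>, so it is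
  dominated by some \<open>u \<in> D - C\<close>; since \<open>v \<notin> N(I1)\<close>, \<open>u\<close> is not in \<open>I1\<close>, i.e. \<open>u \<in> R\<close>.\<close>

lemma graph_edge_sym: "graph V E \<Longrightarrow> E u v \<Longrightarrow> E v u"
  unfolding graph_def by blast

lemma graph_edge_in_vertices: "graph V E \<Longrightarrow> E u v \<Longrightarrow> u \<in> V \<and> v \<in> V"
  unfolding graph_def by blast

lemma mem_set_nbhd_iff:
  "x \<in> set_nbhd V E S \<longleftrightarrow> x \<in> V \<and> x \<notin> S \<and> (\<exists>u\<in>S. E u x)"
  unfolding set_nbhd_def nbhd_def by blast

lemma mem_set_cnbhd_iff:
  "x \<in> set_cnbhd V E S \<longleftrightarrow> x \<in> S \<or> (x \<in> V \<and> (\<exists>u\<in>S. E u x))"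
  unfolding set_cnbhd_def cnbhd_def nbhd_def by blast

lemma vertex_cover_nbhd_of_outside:
  "vertex_cover V E C \<Longrightarrow> v \<notin> C \<Longrightarrow> E v u \<Longrightarrow> u \<in> C"
  unfolding vertex_cover_def by blast

lemma dominating_setE:
  assumes "dominating_set V E D" and "v \<in> V" and "v \<notin> D"
  obtains u where "u \<in> D" and "E v u"
  using assms unfolding dominating_set_def by blast

lemma cover_complement_outside_nbhd_subset_dominating:
  assumes G: "graph V E" and C: "vertex_cover V E C" and D: "dominating_set V E D"
  shows "V - C - set_nbhd V E (D \<inter> C) \<subseteq> D"
proof
  fix v
  assume v: "v \<in> V - C - set_nbhd V E (D \<inter> C)"
  show "v \<in> D"
  proof (rule ccontr)
    assume "v \<notin> D"
    with D v obtain u where "u \<in> D" and vu: "E v u"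
      by (auto elim: dominating_setE)
    moreover have "u \<in> C"
      using vertex_cover_nbhd_of_outside[OF C _ vu] v by blast
    ultimately have "v \<in> set_nbhd V E (D \<inter> C)"
      using v graph_edge_sym[OF G vu] by (auto simp: mem_set_nbhd_iff)
    with v show False by blast
  qed
qed

lemma cover_vertex_dominated_by_nbhd_part:
  assumes G: "graph V E" and C: "vertex_cover V E C" and D: "dominating_set V E D"
    and vC: "v \<in> C"
    and v_closed: "v \<notin> set_cnbhd V E (D \<inter> C)"
    and v_open: "v \<notin> set_nbhd V E (V - C - set_nbhd V E (D \<inter> C))"
  shows "dominated_by V E (set_nbhd V E (D \<inter> C) \<inter> (V - C) \<inter> D) v"
proof -
  have "v \<in> V" "v \<notin> D"
    using vC C v_closed by (auto simp: vertex_cover_def mem_set_cnbhd_iff)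
  with D obtain u where uD: "u \<in> D" and vu: "E v u"
    by (auto elim: dominating_setE)
  have uv: "E u v"
    using graph_edge_sym[OF G vu] .
  have uV: "u \<in> V"
    using graph_edge_in_vertices[OF G vu] by blast
  have uC: "u \<notin> C"
    using v_closed uD uv \<open>v \<in> V\<close> by (auto simp: mem_set_cnbhd_iff)
  have "u \<in> set_nbhd V E (D \<inter> C)"
    using v_open uV uC uv vC \<open>v \<in> V\<close> by (auto simp: mem_set_nbhd_iff)
  with uD uV uC vu show ?thesis
    unfolding dominated_by_def by blast
qed

theorem lemma6:
  fixes V :: "'a set" and E :: "'a \<Rightarrow> 'a \<Rightarrow> bool" and k :: nat
    and C D :: "'a set"
  assumes "graph V E"
    and "k \<ge> 1"
    and "min_vertex_cover V E C"
    and "k_membership_dom_set V E k D"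
  defines "I \<equiv> V - C"
  defines "C1 \<equiv> D \<inter> C"
  defines "I1 \<equiv> I - (set_nbhd V E C1 \<inter> I)"
  defines "R \<equiv> set_nbhd V E C1 \<inter> I \<inter> D"
  shows "I1 \<subseteq> D \<and>
    (\<forall>v \<in> C - (set_cnbhd V E C1 \<union> set_nbhd V E I1). dominated_by V E R v)"
proof -
  have cover: "vertex_cover V E C"
    using assms(3) unfolding min_vertex_cover_def by blast
  have dom: "dominating_set V E D"
    using assms(4) unfolding k_membership_dom_set_def by blast
  have I1_eq: "I1 = V - C - set_nbhd V E (D \<inter> C)"
    unfolding I1_def I_def C1_def by blast
  show ?thesis
    using cover_complement_outside_nbhd_subset_dominating[OF assms(1) cover dom]
      cover_vertex_dominated_by_nbhd_part[OF assms(1) cover dom]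
    unfolding I1_eq R_def I_def C1_def by blast
qed

end
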